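(* Let $k\in\mathbb{N}$ and let $H=\sum_P\alpha_PP$ be an $n$-qubit Hamiltonian with $\|H\|_\infty\le1$ and $\mathrm{tr}(H)=0$, and let $A=\Pi_D(I^{\otimes n}\otimes H)\Pi_D$ and $H_{>k}=\sum_{|P|>k}\alpha_PP$. Then for every integer $\ell\ge2$, \[ |\langle\sigma_{I^{\otimes n}}|A^\ell|\sigma_{I^{\otimes n}}\rangle| \le \langle\sigma_{I^{\otimes n}}|A^2|\sigma_{I^{\otimes n}}\rangle = \|H_{>k}\|_2^2. \]
   Context: The $n$-qubit Paulis are $\{I,X,Y,Z\}^{\otimes n}$ with weight $|P|$ the number of non-identity factors; every Hamiltonian is uniquely $H=\sum_P\alpha_PP$ with real $\alpha_P$. $|\sigma_{I^{\otimes n}}\rangle=2^{-n/2}\sum_{x}|x\rangle\otimes|x\rangle$ and $|\sigma_P\rangle=(I^{\otimes n}\otimes P)|\sigma_{I^{\otimes n}}\rangle$. $D$ is the span of $|\sigma_P\rangle$ for $P=I^{\otimes n}$ or $|P|>k$; $\Pi_D$ is its projector. $\|M\|_2=\sqrt{\mathrm{tr}(M^\dagger M)/2^n}$ is the normalized Frobenius norm and $\|\cdot\|_\infty$ the spectral norm. *)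

theory Defs
  imports "Jordan_Normal_Form.Matrix" Complex_Main
begin

datatype pauli = PI | PX | PY | PZ

fun pauli_entry :: "pauli \<Rightarrow> nat \<Rightarrow> nat \<Rightarrow> complex" where
  "pauli_entry PI a b = (if a = b then 1 else 0)"
| "pauli_entry PX a b = (if a \<noteq> b then 1 else 0)"
| "pauli_entry PY a b = (if a = b then 0 else if a = 0 then - \<i> else \<i>)"
| "pauli_entry PZ a b = (if a \<noteq> b then 0 else if a = 0 then 1 else -1)"

text \<open>An n-qubit Pauli string is a list of length n; qubit i corresponds to the
  (n-1-i)-th binary digit of a basis index (qubit 0 is the most significant one),
  i.e. the matrix is the Kronecker product P_0 \<otimes> ... \<otimes> P_(n-1).\<close>

definition paulis :: "nat \<Rightarrow> pauli list set" where
  "paulis n = {ps. length ps = n}"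

definition weight :: "pauli list \<Rightarrow> nat" where
  "weight ps = length (filter (\<lambda>p. p \<noteq> PI) ps)"

definition bit_at :: "nat \<Rightarrow> nat \<Rightarrow> nat \<Rightarrow> nat" where
  "bit_at n i x = x div 2 ^ (n - 1 - i) mod 2"

definition pauli_mat :: "pauli list \<Rightarrow> complex mat" where
  "pauli_mat ps = (let n = length ps in
     mat (2 ^ n) (2 ^ n)
       (\<lambda>(x, y). \<Prod>i<n. pauli_entry (ps ! i) (bit_at n i x) (bit_at n i y)))"

definition pauli_sum :: "nat \<Rightarrow> (pauli list \<Rightarrow> real) \<Rightarrow> pauli list set \<Rightarrow> complex mat" where
  "pauli_sum n \<alpha> S = mat (2 ^ n) (2 ^ n)
     (\<lambda>(i, j). \<Sum>P\<in>S. complex_of_real (\<alpha> P) * pauli_mat P $$ (i, j))"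

definition mtrace :: "complex mat \<Rightarrow> complex" where
  "mtrace M = (\<Sum>i<dim_row M. M $$ (i, i))"

definition kron :: "complex mat \<Rightarrow> complex mat \<Rightarrow> complex mat" where
  "kron A B = mat (dim_row A * dim_row B) (dim_col A * dim_col B)
     (\<lambda>(i, j). A $$ (i div dim_row B, j div dim_col B) * B $$ (i mod dim_row B, j mod dim_col B))"

definition adj :: "complex mat \<Rightarrow> complex mat" where
  "adj M = mat (dim_col M) (dim_row M) (\<lambda>(i, j). cnj (M $$ (j, i)))"

definition vnorm :: "complex vec \<Rightarrow> real" where
  "vnorm v = sqrt (\<Sum>i<dim_vec v. (cmod (v $ i))\<^sup>2)"

definition spec_norm :: "complex mat \<Rightarrow> real" where
  "spec_norm M = Sup {vnorm (M *\<^sub>v v) | v. v \<in> carrier_vec (dim_col M) \<and> vnorm v \<le> 1}"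

definition nfrob :: "nat \<Rightarrow> complex mat \<Rightarrow> real" where
  "nfrob n M = sqrt (Re (mtrace (adj M * M)) / 2 ^ n)"

definition braket :: "complex vec \<Rightarrow> complex vec \<Rightarrow> complex" where
  "braket u v = (\<Sum>i<dim_vec u. cnj (u $ i) * v $ i)"

definition orth_proj :: "nat \<Rightarrow> complex vec set \<Rightarrow> complex mat" where
  "orth_proj N V = (THE M. M \<in> carrier_mat N N \<and> M * M = M \<and> adj M = M \<and>
      {M *\<^sub>v v | v. v \<in> carrier_vec N} = V)"

text \<open>Two copies of n qubits: basis |x>\<otimes>|y> has index x * 2^n + y (consistent with kron).\<close>
definition sigma_I :: "nat \<Rightarrow> complex vec" where
  "sigma_I n = vec (2 ^ n * 2 ^ n)
     (\<lambda>j. if j div 2 ^ n = j mod 2 ^ n then complex_of_real (1 / sqrt (2 ^ n)) else 0)"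

definition sigma :: "nat \<Rightarrow> pauli list \<Rightarrow> complex vec" where
  "sigma n P = kron (1\<^sub>m (2 ^ n)) (pauli_mat P) *\<^sub>v sigma_I n"

definition D_paulis :: "nat \<Rightarrow> nat \<Rightarrow> pauli list set" where
  "D_paulis n k = {P \<in> paulis n. P = replicate n PI \<or> weight P > k}"

text \<open>D = span of the \<sigma>_P, P \<in> D_paulis (finite family, so: all linear combinations).\<close>
definition D_space :: "nat \<Rightarrow> nat \<Rightarrow> complex vec set" where
  "D_space n k = {vec (2 ^ n * 2 ^ n) (\<lambda>j. \<Sum>P\<in>D_paulis n k. c P * sigma n P $ j) | c. True}"

definition Pi_D :: "nat \<Rightarrow> nat \<Rightarrow> complex mat" where
  "Pi_D n k = orth_proj (2 ^ n * 2 ^ n) (D_space n k)"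

end

theory Submission
  imports Defs "HOL-Analysis.L2_Norm"
begin

(*
  A = \<Pi>_D (I \<otimes> H) \<Pi>_D is Hermitian, and it is a contraction because \<Pi>_D is an orthogonal
  projector and I \<otimes> H inherits the bound on the spectral norm of H. Writing A^l = A A^(l-2) A,
  the l-th moment is <w|A^(l-2)|w> with w = A |\<sigma>_I>, so by Cauchy-Schwarz it is bounded by
  |w|^2 = <\<sigma>_I|A^2|\<sigma>_I>. Finally, (I \<otimes> H)|\<sigma>_I> = \<Sum>_P \<alpha>_P |\<sigma>_P> with the \<sigma>_P orthonormal
  and \<sigma>_I \<in> D, so w keeps exactly the terms with P = I or |P| > k; the first vanishes because
  \<alpha>_I = tr H / 2^n = 0, hence w is the vectorization of H_{>k} and |w|^2 = |H_{>k}|_2^2.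
*)

lemma sum_lessThan_mult_split:
  fixes f :: "nat \<Rightarrow> 'b::comm_monoid_add"
  shows "(\<Sum>j<a * b. f j) = (\<Sum>x<a. \<Sum>y<b. f (x * b + y))"
proof (induction a)
  case (Suc a)
  have shift: "(\<Sum>j<m + c. f j) = (\<Sum>j<m. f j) + (\<Sum>y<c. f (m + y))" for m c
    by (induction c) (simp_all add: add.assoc)
  have "(\<Sum>j<Suc a * b. f j) = (\<Sum>j<a * b + b. f j)"
    by (simp add: add.commute)
  also have "\<dots> = (\<Sum>j<a * b. f j) + (\<Sum>y<b. f (a * b + y))"
    by (rule shift)
  finally show ?case using Suc by simp
qed simp

lemma index_pair_less:
  fixes x y a b :: nat
  assumes "x < a" "y < b"
  shows "x * b + y < a * b"
proof -
  have "x * b + y < Suc x * b" using assms(2) by simp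
  also have "\<dots> \<le> a * b" using assms(1) by (intro mult_le_mono1) simp
  finally show ?thesis .
qed

lemma index_pair_div_mod:
  fixes x y N :: nat
  assumes "y < N"
  shows "(x * N + y) div N = x" "(x * N + y) mod N = y"
  using assms by auto

section \<open>Vectorization of matrices\<close>

text \<open>Entry \<open>x * N + y\<close> of \<open>vectorize N B\<close> is \<open>B(y, x) / sqrt N\<close>, so that
  \<open>vectorize N B = (I \<otimes> B) |\<sigma>_I>\<close>.\<close>
definition vectorize :: "nat \<Rightarrow> complex mat \<Rightarrow> complex vec" where
  "vectorize N B = vec (N * N) (\<lambda>j. B $$ (j mod N, j div N) * complex_of_real (1 / sqrt (real N)))"

definition hs_inner :: "nat \<Rightarrow> complex mat \<Rightarrow> complex mat \<Rightarrow> complex" where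
  "hs_inner N A B = (\<Sum>i<N. \<Sum>j<N. cnj (A $$ (i, j)) * B $$ (i, j))"

lemma dim_vectorize [simp]: "dim_vec (vectorize N B) = N * N"
  by (simp add: vectorize_def)

lemma vectorize_carrier [simp]: "vectorize N B \<in> carrier_vec (N * N)"
  by (simp add: carrier_vecI)

lemma kron_one_mult_vectorize:
  assumes M: "M \<in> carrier_mat N N" and B: "B \<in> carrier_mat N N"
  shows "kron (1\<^sub>m N) M *\<^sub>v vectorize N B = vectorize N (M * B)"
proof (rule eq_vecI)
  fix j assume "j < dim_vec (vectorize N (M * B))"
  hence j: "j < N * N" by simp
  hence jd: "j div N < N" by (simp add: less_mult_imp_div_less)
  have jm: "j mod N < N" using j by (cases N) auto
  let ?c = "complex_of_real (1 / sqrt (real N))"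
  have "(kron (1\<^sub>m N) M *\<^sub>v vectorize N B) $ j
      = (\<Sum>l<N * N. kron (1\<^sub>m N) M $$ (j, l) * vectorize N B $ l)"
    using j M by (auto simp: kron_def scalar_prod_def atLeast0LessThan intro!: sum.cong)
  also have "\<dots> = (\<Sum>x<N. \<Sum>y<N. kron (1\<^sub>m N) M $$ (j, x * N + y) * vectorize N B $ (x * N + y))"
    by (rule sum_lessThan_mult_split)
  also have "\<dots> = (\<Sum>x<N. \<Sum>y<N. if j div N = x then M $$ (j mod N, y) * (B $$ (y, x) * ?c) else 0)"
    using j jd M index_pair_less[of _ N _ N]
    by (intro sum.cong refl) (simp add: kron_def vectorize_def index_pair_div_mod)
  also have "\<dots> = (\<Sum>y<N. M $$ (j mod N, y) * (B $$ (y, j div N) * ?c))"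
    using jd by (simp add: sum.swap[of _ "{..<N}" "{..<N}"])
  also have "\<dots> = vectorize N (M * B) $ j"
    using j jd jm M B
    by (simp add: vectorize_def scalar_prod_def atLeast0LessThan sum_distrib_right mult.assoc
        sum_divide_distrib)
  finally show "(kron (1\<^sub>m N) M *\<^sub>v vectorize N B) $ j = vectorize N (M * B) $ j" .
qed (use M in \<open>simp add: kron_def\<close>)

lemma braket_vectorize: "braket (vectorize N A) (vectorize N B) = hs_inner N A B / of_nat N"
proof -
  let ?c = "complex_of_real (1 / sqrt (real N))"
  have cc: "cnj ?c * ?c = 1 / of_nat N"
    by (simp flip: of_real_mult)
  have "braket (vectorize N A) (vectorize N B)
      = (\<Sum>j<N * N. cnj (A $$ (j mod N, j div N)) * B $$ (j mod N, j div N) * (cnj ?c * ?c))"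
    unfolding braket_def by (intro sum.cong) (auto simp: vectorize_def)
  also have "\<dots> = (\<Sum>x<N. \<Sum>y<N. cnj (A $$ (y, x)) * B $$ (y, x) * (cnj ?c * ?c))"
    by (subst sum_lessThan_mult_split) (simp add: index_pair_div_mod)
  also have "\<dots> = hs_inner N A B * (cnj ?c * ?c)"
    unfolding hs_inner_def by (subst sum.swap) (simp only: sum_distrib_right)
  finally show ?thesis unfolding cc by simp
qed

lemma mtrace_adj_mult_eq_hs_inner:
  assumes "X \<in> carrier_mat N N"
  shows "mtrace (adj X * X) = hs_inner N X X"
proof -
  have "mtrace (adj X * X) = (\<Sum>i<N. \<Sum>l<N. cnj (X $$ (l, i)) * X $$ (l, i))"
    using assms unfolding mtrace_def
    by (intro sum.cong) (auto simp: adj_def scalar_prod_def atLeast0LessThan intro!: sum.cong)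
  also have "\<dots> = hs_inner N X X"
    unfolding hs_inner_def by (rule sum.swap)
  finally show ?thesis .
qed

lemma mtrace_eq_hs_inner_one:
  assumes "X \<in> carrier_mat N N"
  shows "mtrace X = hs_inner N (1\<^sub>m N) X"
proof -
  have "(\<Sum>j<N. cnj (1\<^sub>m N $$ (i, j)) * X $$ (i, j)) = X $$ (i, i)" if "i < N" for i
  proof -
    have "(\<Sum>j<N. cnj (1\<^sub>m N $$ (i, j)) * X $$ (i, j)) = (\<Sum>j<N. if i = j then X $$ (i, j) else 0)"
      using that by (intro sum.cong) auto
    thus ?thesis using that by simp
  qed
  thus ?thesis using assms unfolding mtrace_def hs_inner_def by (auto intro: sum.cong)
qed

lemma kron_carrier_mat:
  "A \<in> carrier_mat a a' \<Longrightarrow> B \<in> carrier_mat b b' \<Longrightarrow> kron A B \<in> carrier_mat (a * b) (a' * b')"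
  by (simp add: kron_def)

lemma kron_index:
  assumes "A \<in> carrier_mat a a" "B \<in> carrier_mat b b"
    and "i1 < a" "i2 < b" "j1 < a" "j2 < b"
  shows "kron A B $$ (i1 * b + i2, j1 * b + j2) = A $$ (i1, j1) * B $$ (i2, j2)"
  using assms index_pair_less[of i1 a i2 b] index_pair_less[of j1 a j2 b]
  by (simp add: kron_def index_pair_div_mod)

lemma hs_inner_kron:
  assumes A: "A \<in> carrier_mat a a" and C: "C \<in> carrier_mat a a"
    and B: "B \<in> carrier_mat b b" and D: "D \<in> carrier_mat b b"
  shows "hs_inner (a * b) (kron A B) (kron C D) = hs_inner a A C * hs_inner b B D"
proof -
  have "hs_inner (a * b) (kron A B) (kron C D) =
     (\<Sum>i1<a. \<Sum>i2<b. \<Sum>j1<a. \<Sum>j2<b.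
        cnj (kron A B $$ (i1 * b + i2, j1 * b + j2)) * kron C D $$ (i1 * b + i2, j1 * b + j2))"
    unfolding hs_inner_def by (simp add: sum_lessThan_mult_split)
  also have "\<dots> = (\<Sum>i1<a. \<Sum>i2<b. \<Sum>j1<a. \<Sum>j2<b.
      (cnj (A $$ (i1, j1)) * C $$ (i1, j1)) * (cnj (B $$ (i2, j2)) * D $$ (i2, j2)))"
    using A B C D by (intro sum.cong refl) (simp add: kron_index)
  also have "\<dots> = (\<Sum>i1<a. \<Sum>j1<a. \<Sum>i2<b. \<Sum>j2<b.
      (cnj (A $$ (i1, j1)) * C $$ (i1, j1)) * (cnj (B $$ (i2, j2)) * D $$ (i2, j2)))"
    by (rule sum.cong[OF refl], rule sum.swap)
  also have "\<dots> = (\<Sum>i1<a. \<Sum>j1<a. (cnj (A $$ (i1, j1)) * C $$ (i1, j1)) * hs_inner b B D)"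
    unfolding hs_inner_def by (simp add: sum_distrib_left)
  also have "\<dots> = hs_inner a A C * hs_inner b B D"
    unfolding hs_inner_def[of a] by (simp add: sum_distrib_right)
  finally show ?thesis .
qed

lemma kron_one_one: "0 < b \<Longrightarrow> kron (1\<^sub>m a) (1\<^sub>m b) = 1\<^sub>m (a * b)"
proof (rule eq_matI)
  fix i j assume b: "0 < b" and i: "i < dim_row (1\<^sub>m (a * b))" and j: "j < dim_col (1\<^sub>m (a * b))"
  have "i div b < a" "j div b < a" using i j by (simp_all add: less_mult_imp_div_less)
  moreover have "(i div b = j div b \<and> i mod b = j mod b) = (i = j)"
    by (metis div_mult_mod_eq)
  ultimately show "kron (1\<^sub>m a) (1\<^sub>m b) $$ (i, j) = 1\<^sub>m (a * b) $$ (i, j)"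
    using i j b by (auto simp: kron_def)
qed (auto simp: kron_def)

lemma adj_mult:
  assumes "A \<in> carrier_mat a b" "B \<in> carrier_mat b c"
  shows "adj (A * B) = adj B * adj A"
proof (rule eq_matI)
  fix i j assume "i < dim_row (adj B * adj A)" "j < dim_col (adj B * adj A)"
  hence i: "i < c" and j: "j < a" using assms by (auto simp: adj_def)
  have "adj (A * B) $$ (i, j) = (\<Sum>l\<in>{0..<b}. cnj (B $$ (l, i)) * cnj (A $$ (j, l)))"
    using assms i j by (simp add: adj_def scalar_prod_def mult.commute)
  also have "\<dots> = (adj B * adj A) $$ (i, j)"
    using assms i j by (simp add: adj_def scalar_prod_def)
  finally show "adj (A * B) $$ (i, j) = (adj B * adj A) $$ (i, j)" .
qed (use assms in \<open>auto simp: adj_def\<close>)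

lemma adj_sandwich:
  assumes P: "P \<in> carrier_mat d d" and K: "K \<in> carrier_mat d d"
    and "adj P = P" "adj K = K"
  shows "adj (P * K * P) = P * K * P"
  using assms adj_mult[OF mult_carrier_mat[OF P K] P] adj_mult[OF P K]
  by (simp add: assoc_mult_mat[OF P K P])

lemma adj_kron_one:
  assumes H: "H \<in> carrier_mat N N" and aH: "adj H = H"
  shows "adj (kron (1\<^sub>m N) H) = kron (1\<^sub>m N) H"
proof (rule eq_matI)
  have e: "cnj (H $$ (b, a)) = H $$ (a, b)" if "a < N" "b < N" for a b
    using H that arg_cong[OF aH, of "\<lambda>M. M $$ (a, b)"] by (simp add: adj_def)
  fix i j assume "i < dim_row (kron (1\<^sub>m N) H)" "j < dim_col (kron (1\<^sub>m N) H)"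
  hence i: "i < N * N" and j: "j < N * N" using H by (auto simp: kron_def)
  hence "0 < N" by (cases N) auto
  moreover have "i div N < N" "j div N < N" using i j by (simp_all add: less_mult_imp_div_less)
  ultimately show "adj (kron (1\<^sub>m N) H) $$ (i, j) = kron (1\<^sub>m N) H $$ (i, j)"
    using i j H e by (auto simp: adj_def kron_def)
qed (use H in \<open>auto simp: adj_def kron_def\<close>)


section \<open>Pauli matrices\<close>

lemma pauli_mat_carrier [simp]: "pauli_mat P \<in> carrier_mat (2 ^ length P) (2 ^ length P)"
  by (simp add: pauli_mat_def Let_def)

lemma pauli_mat_dim [simp]:
  "dim_row (pauli_mat P) = 2 ^ length P" "dim_col (pauli_mat P) = 2 ^ length P"
  by (simp_all add: pauli_mat_def Let_def)

lemma pauli_mat_index: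
  "x < 2 ^ length P \<Longrightarrow> y < 2 ^ length P \<Longrightarrow> pauli_mat P $$ (x, y) =
     (\<Prod>i<length P. pauli_entry (P ! i) (bit_at (length P) i x) (bit_at (length P) i y))"
  by (simp add: pauli_mat_def Let_def)

lemma pauli_mat_Nil: "pauli_mat [] = 1\<^sub>m 1"
  by (rule eq_matI) (auto simp: pauli_mat_def)

lemma pauli_mat_single: "a < 2 \<Longrightarrow> b < 2 \<Longrightarrow> pauli_mat [p] $$ (a, b) = pauli_entry p a b"
  by (simp add: pauli_mat_def bit_at_def)

lemma bit_at_Suc_0:
  fixes x m :: nat
  assumes "x < 2 ^ Suc m"
  shows "bit_at (Suc m) 0 x = x div 2 ^ m"
  using assms by (simp add: bit_at_def less_mult_imp_div_less mult.commute)

lemma bit_at_Suc_Suc: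
  fixes x m i :: nat
  assumes "i < m"
  shows "bit_at (Suc m) (Suc i) x = bit_at m i (x mod 2 ^ m)"
proof -
  have "(x mod 2 ^ m) div 2 ^ e mod 2 = x div 2 ^ e mod 2" if "e < m" for e
  proof -
    have "(x mod 2 ^ m) div 2 ^ e mod 2 = take_bit 1 (drop_bit e (take_bit m x))"
      by (simp add: take_bit_eq_mod drop_bit_eq_div)
    also have "\<dots> = take_bit 1 (drop_bit e x)"
      using that by (simp add: drop_bit_take_bit min_def)
    finally show ?thesis by (simp add: take_bit_eq_mod drop_bit_eq_div)
  qed
  from this[of "m - 1 - i"] show ?thesis using assms by (simp add: bit_at_def)
qed

lemma pauli_mat_Cons: "pauli_mat (p # P) = kron (pauli_mat [p]) (pauli_mat P)"
proof (rule eq_matI)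
  let ?m = "length P"
  fix x y assume "x < dim_row (kron (pauli_mat [p]) (pauli_mat P))"
    "y < dim_col (kron (pauli_mat [p]) (pauli_mat P))"
  hence x: "x < 2 ^ Suc ?m" and y: "y < 2 ^ Suc ?m" by (simp_all add: kron_def)
  have "x div 2 ^ ?m < 2" "y div 2 ^ ?m < 2"
    using x y by (simp_all add: less_mult_imp_div_less mult.commute)
  moreover have "pauli_mat (p # P) $$ (x, y) =
      (\<Prod>i<Suc ?m. pauli_entry ((p # P) ! i) (bit_at (Suc ?m) i x) (bit_at (Suc ?m) i y))"
    using x y by (simp add: pauli_mat_def)
  moreover have "\<dots> = pauli_entry p (x div 2 ^ ?m) (y div 2 ^ ?m) *
      (\<Prod>i<?m. pauli_entry (P ! i) (bit_at ?m i (x mod 2 ^ ?m)) (bit_at ?m i (y mod 2 ^ ?m)))"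
    by (simp only: prod.lessThan_Suc_shift) (simp add: bit_at_Suc_0[OF x] bit_at_Suc_0[OF y] bit_at_Suc_Suc)
  ultimately show "pauli_mat (p # P) $$ (x, y) = kron (pauli_mat [p]) (pauli_mat P) $$ (x, y)"
    using x y by (simp add: kron_def pauli_mat_index bit_at_def)
qed (simp_all add: kron_def)

lemma hs_inner_pauli_mat_single:
  "hs_inner 2 (pauli_mat [p]) (pauli_mat [q]) = (if p = q then 2 else 0)"
proof -
  have "hs_inner 2 (pauli_mat [p]) (pauli_mat [q])
      = (\<Sum>i<2. \<Sum>j<2. cnj (pauli_entry p i j) * pauli_entry q i j)"
    unfolding hs_inner_def by (intro sum.cong refl) (simp add: pauli_mat_single)
  also have "\<dots> = (if p = q then 2 else 0)"
    by (cases p; cases q) (simp_all add: numeral_2_eq_2 lessThan_Suc)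
  finally show ?thesis .
qed

lemma hs_inner_pauli_mat:
  "length Q = length P \<Longrightarrow>
   hs_inner (2 ^ length P) (pauli_mat P) (pauli_mat Q) = (if P = Q then 2 ^ length P else 0)"
proof (induction P arbitrary: Q)
  case Nil
  then show ?case by (simp add: pauli_mat_Nil hs_inner_def)
next
  case (Cons p P)
  then obtain q Q' where Q: "Q = q # Q'" and l: "length Q' = length P" by (cases Q) auto
  have "hs_inner (2 ^ length (p # P)) (pauli_mat (p # P)) (pauli_mat Q)
      = hs_inner (2 * 2 ^ length P) (kron (pauli_mat [p]) (pauli_mat P))
          (kron (pauli_mat [q]) (pauli_mat Q'))"
    by (simp add: Q pauli_mat_Cons[of p P] pauli_mat_Cons[of q Q'])
  also have "\<dots> = hs_inner 2 (pauli_mat [p]) (pauli_mat [q]) *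
      hs_inner (2 ^ length P) (pauli_mat P) (pauli_mat Q')"
    using l pauli_mat_carrier[of "[p]"] pauli_mat_carrier[of "[q]"] pauli_mat_carrier[of Q']
    by (intro hs_inner_kron) auto
  also have "\<dots> = (if p # P = Q then 2 ^ length (p # P) else 0)"
    using Cons.IH[OF l] by (simp add: hs_inner_pauli_mat_single Q)
  finally show ?case .
qed

lemma pauli_mat_replicate_PI: "pauli_mat (replicate m PI) = 1\<^sub>m (2 ^ m)"
proof (induction m)
  case 0
  then show ?case by (simp add: pauli_mat_Nil)
next
  case (Suc m)
  have "pauli_mat [PI] = 1\<^sub>m 2"
    by (rule eq_matI) (auto simp: pauli_mat_single)
  then show ?case using Suc by (simp add: pauli_mat_Cons[of _ "replicate m PI"] kron_one_one)
qed

lemma adj_pauli_mat: "adj (pauli_mat P) = pauli_mat P"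
proof (rule eq_matI)
  have entry: "cnj (pauli_entry p b a) = pauli_entry p a b" if "a < 2" "b < 2" for p a b
    using that by (cases p) (auto simp: less_2_cases_iff)
  fix i j assume "i < dim_row (pauli_mat P)" "j < dim_col (pauli_mat P)"
  then show "adj (pauli_mat P) $$ (i, j) = pauli_mat P $$ (i, j)"
    by (simp add: adj_def pauli_mat_index entry bit_at_def)
qed (auto simp: adj_def)

lemma finite_paulis: "finite (paulis n)"
proof -
  have "(UNIV :: pauli set) \<subseteq> {PI, PX, PY, PZ}"
    using pauli.exhaust by auto
  then have "finite (UNIV :: pauli set)"
    by (rule finite_subset) simp
  from finite_lists_length_eq[OF this, of n] show ?thesis by (simp add: paulis_def)
qed

lemma pauli_sum_carrier [simp]: "pauli_sum n \<alpha> S \<in> carrier_mat (2 ^ n) (2 ^ n)"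
  by (simp add: pauli_sum_def)

lemma adj_pauli_sum:
  assumes "S \<subseteq> paulis n"
  shows "adj (pauli_sum n \<alpha> S) = pauli_sum n \<alpha> S"
proof (rule eq_matI)
  fix i j assume "i < dim_row (pauli_sum n \<alpha> S)" "j < dim_col (pauli_sum n \<alpha> S)"
  hence i: "i < 2 ^ n" and j: "j < 2 ^ n" by (auto simp: pauli_sum_def)
  have "cnj (pauli_mat P $$ (j, i)) = pauli_mat P $$ (i, j)" if "P \<in> S" for P
    using that assms i j arg_cong[OF adj_pauli_mat[of P], of "\<lambda>M. M $$ (i, j)"]
    by (auto simp: adj_def paulis_def)
  then show "adj (pauli_sum n \<alpha> S) $$ (i, j) = pauli_sum n \<alpha> S $$ (i, j)"
    using i j by (auto simp: adj_def pauli_sum_def intro!: sum.cong)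
qed (auto simp: adj_def pauli_sum_def)

lemma pauli_sum_insert_zero:
  assumes "finite S" "\<alpha> P = 0"
  shows "pauli_sum n \<alpha> (insert P S) = pauli_sum n \<alpha> S"
  using assms by (cases "P \<in> S") (auto simp: pauli_sum_def insert_absorb)


section \<open>Orthogonal projection onto the span of an orthonormal family\<close>

definition orthonormal_family :: "nat \<Rightarrow> ('a \<Rightarrow> complex vec) \<Rightarrow> 'a set \<Rightarrow> bool" where
  "orthonormal_family d e S \<longleftrightarrow> finite S \<and> (\<forall>P\<in>S. dim_vec (e P) = d) \<and>
     (\<forall>P\<in>S. \<forall>Q\<in>S. braket (e P) (e Q) = (if P = Q then 1 else 0))"

definition family_proj :: "nat \<Rightarrow> ('a \<Rightarrow> complex vec) \<Rightarrow> 'a set \<Rightarrow> complex mat" where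
  "family_proj d e S = mat d d (\<lambda>(i, j). \<Sum>P\<in>S. e P $ i * cnj (e P $ j))"

definition family_span :: "nat \<Rightarrow> ('a \<Rightarrow> complex vec) \<Rightarrow> 'a set \<Rightarrow> complex vec set" where
  "family_span d e S = {vec d (\<lambda>j. \<Sum>P\<in>S. c P * e P $ j) | c. True}"

definition mat_range :: "nat \<Rightarrow> complex mat \<Rightarrow> complex vec set" where
  "mat_range d X = {X *\<^sub>v v | v. v \<in> carrier_vec d}"

lemma braket_lincomb:
  assumes "dim_vec u = d"
  shows "braket u (vec d (\<lambda>j. \<Sum>P\<in>S. c P * f P $ j)) = (\<Sum>P\<in>S. c P * braket u (f P))"
proof -
  have "braket u (vec d (\<lambda>j. \<Sum>P\<in>S. c P * f P $ j)) = (\<Sum>i<d. \<Sum>P\<in>S. c P * (cnj (u $ i) * f P $ i))"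
    unfolding braket_def using assms by (intro sum.cong) (auto simp: sum_distrib_left ac_simps)
  also have "\<dots> = (\<Sum>P\<in>S. c P * braket u (f P))"
    unfolding braket_def using assms by (subst sum.swap) (simp add: sum_distrib_left)
  finally show ?thesis .
qed

lemma family_proj_carrier [simp]: "family_proj d e S \<in> carrier_mat d d"
  by (simp add: family_proj_def)

lemma family_proj_dim [simp]: "dim_row (family_proj d e S) = d" "dim_col (family_proj d e S) = d"
  by (simp_all add: family_proj_def)

lemma family_proj_mult_vec:
  assumes "orthonormal_family d e S" "v \<in> carrier_vec d"
  shows "family_proj d e S *\<^sub>v v = vec d (\<lambda>i. \<Sum>P\<in>S. braket (e P) v * e P $ i)"
proof (rule eq_vecI)
  fix i assume "i < dim_vec (vec d (\<lambda>i. \<Sum>P\<in>S. braket (e P) v * e P $ i))"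
  hence i: "i < d" by simp
  have "(family_proj d e S *\<^sub>v v) $ i = (\<Sum>j<d. \<Sum>P\<in>S. e P $ i * (cnj (e P $ j) * v $ j))"
    using i assms(2)
    by (auto simp: family_proj_def scalar_prod_def atLeast0LessThan sum_distrib_right mult.assoc
        intro!: sum.cong)
  also have "\<dots> = (\<Sum>P\<in>S. \<Sum>j<d. e P $ i * (cnj (e P $ j) * v $ j))"
    by (rule sum.swap)
  also have "\<dots> = (\<Sum>P\<in>S. braket (e P) v * e P $ i)"
    using assms(1) unfolding orthonormal_family_def braket_def
    by (intro sum.cong refl) (simp add: sum_distrib_left ac_simps)
  finally show "(family_proj d e S *\<^sub>v v) $ i = vec d (\<lambda>i. \<Sum>P\<in>S. braket (e P) v * e P $ i) $ i"
    using i by simp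
qed (use assms in simp)

lemma family_span_carrier: "w \<in> family_span d e S \<Longrightarrow> w \<in> carrier_vec d"
  by (auto simp: family_span_def)

lemma family_member_in_span:
  assumes "orthonormal_family d e S" "Q \<in> S"
  shows "e Q \<in> family_span d e S"
proof -
  have "e Q = vec d (\<lambda>j. \<Sum>P\<in>S. (if P = Q then 1 else 0) * e P $ j)"
    using assms
    by (intro eq_vecI) (auto simp: orthonormal_family_def if_distrib[of "\<lambda>x. x * _"] cong: if_cong)
  then show ?thesis unfolding family_span_def
    by (intro CollectI exI[of _ "\<lambda>P. if P = Q then 1 else 0"]) simp
qed

lemma family_proj_fixes_span:
  assumes ON: "orthonormal_family d e S" and w: "w \<in> family_span d e S"
  shows "family_proj d e S *\<^sub>v w = w"
proof -
  obtain c where w_eq: "w = vec d (\<lambda>j. \<Sum>P\<in>S. c P * e P $ j)"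
    using w by (auto simp: family_span_def)
  have coeff: "braket (e Q) w = c Q" if Q: "Q \<in> S" for Q
  proof -
    have "braket (e Q) w = (\<Sum>P\<in>S. c P * braket (e Q) (e P))"
      unfolding w_eq using ON Q by (intro braket_lincomb) (auto simp: orthonormal_family_def)
    also have "\<dots> = (\<Sum>P\<in>S. if P = Q then c P else 0)"
      using ON Q by (intro sum.cong) (auto simp: orthonormal_family_def)
    also have "\<dots> = c Q" using ON Q by (simp add: orthonormal_family_def)
    finally show ?thesis .
  qed
  have "family_proj d e S *\<^sub>v w = vec d (\<lambda>i. \<Sum>P\<in>S. braket (e P) w * e P $ i)"
    using ON family_span_carrier[OF w] by (rule family_proj_mult_vec)
  also have "\<dots> = w"
    unfolding w_eq by (intro eq_vecI) (auto simp: coeff[unfolded w_eq] intro!: sum.cong)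
  finally show ?thesis .
qed

lemma mat_range_family_proj:
  assumes "orthonormal_family d e S"
  shows "mat_range d (family_proj d e S) = family_span d e S"
proof
  show "mat_range d (family_proj d e S) \<subseteq> family_span d e S"
    using assms by (auto simp: mat_range_def family_proj_mult_vec family_span_def)
  show "family_span d e S \<subseteq> mat_range d (family_proj d e S)"
    using family_proj_fixes_span[OF assms] family_span_carrier unfolding mat_range_def
    by (metis (mono_tags, lifting) mem_Collect_eq subsetI)
qed

lemma family_proj_idem:
  assumes "orthonormal_family d e S"
  shows "family_proj d e S * family_proj d e S = family_proj d e S"
proof (rule mat_col_eqI)
  fix j assume "j < dim_col (family_proj d e S)"
  hence j: "j < d" by simp
  have "col (family_proj d e S) j = vec d (\<lambda>i. \<Sum>P\<in>S. cnj (e P $ j) * e P $ i)"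
    using j by (intro eq_vecI) (auto simp: family_proj_def ac_simps)
  then have "col (family_proj d e S) j \<in> family_span d e S"
    unfolding family_span_def by auto
  then show "col (family_proj d e S * family_proj d e S) j = col (family_proj d e S) j"
    using j by (simp add: col_mult2[of _ d d _ d] family_proj_fixes_span[OF assms])
qed auto

lemma adj_family_proj: "adj (family_proj d e S) = family_proj d e S"
  by (rule eq_matI) (auto simp: adj_def family_proj_def mult.commute)

lemma idem_mult_eq_of_mat_range_subset:
  assumes X: "X \<in> carrier_mat d d" and Y: "Y \<in> carrier_mat d d"
    and idem: "X * X = X" and sub: "mat_range d Y \<subseteq> mat_range d X"
  shows "X * Y = Y"
proof (rule mat_col_eqI)
  fix j assume "j < dim_col Y"
  hence j: "j < d" using Y by simp
  have "col Y j = Y *\<^sub>v unit_vec d j"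
    using Y j by (intro eq_vecI) auto
  then have "col Y j \<in> mat_range d Y" unfolding mat_range_def by auto
  then obtain w where w: "w \<in> carrier_vec d" "col Y j = X *\<^sub>v w"
    using sub by (auto simp: mat_range_def)
  have "col (X * Y) j = X *\<^sub>v col Y j" by (rule col_mult2[OF X Y j])
  also have "\<dots> = (X * X) *\<^sub>v w" using w X by simp
  also have "\<dots> = col Y j" using idem w by simp
  finally show "col (X * Y) j = col Y j" .
qed (use X Y in auto)

text \<open>An orthogonal projector is determined by its range: \<open>X = adj (Y * X) = adj X * adj Y = X * Y = Y\<close>.\<close>
lemma orth_projector_unique:
  assumes X: "X \<in> carrier_mat d d" and Y: "Y \<in> carrier_mat d d"
    and "X * X = X" "Y * Y = Y" "adj X = X" "adj Y = Y"
    and "mat_range d X = mat_range d Y"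
  shows "X = Y"
proof -
  have "X * Y = Y" "Y * X = X"
    using idem_mult_eq_of_mat_range_subset[OF X Y] idem_mult_eq_of_mat_range_subset[OF Y X] assms
    by auto
  then show ?thesis using assms adj_mult[OF Y X] by metis
qed

lemma orth_proj_family_span:
  assumes "orthonormal_family d e S"
  shows "orth_proj d (family_span d e S) = family_proj d e S"
  unfolding orth_proj_def
proof (rule the_equality)
  show "family_proj d e S \<in> carrier_mat d d \<and> family_proj d e S * family_proj d e S = family_proj d e S \<and>
      adj (family_proj d e S) = family_proj d e S \<and>
      {family_proj d e S *\<^sub>v v |v. v \<in> carrier_vec d} = family_span d e S"
    using family_proj_idem[OF assms] adj_family_proj mat_range_family_proj[OF assms]
    by (simp add: mat_range_def)
next
  fix M assume "M \<in> carrier_mat d d \<and> M * M = M \<and> adj M = M \<and>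
      {M *\<^sub>v v |v. v \<in> carrier_vec d} = family_span d e S"
  then show "M = family_proj d e S"
    using family_proj_idem[OF assms] adj_family_proj mat_range_family_proj[OF assms]
    by (intro orth_projector_unique[of M d]) (auto simp: mat_range_def)
qed


section \<open>Norms and contractions\<close>

lemma vnorm_L2: "vnorm v = L2_set (\<lambda>i. cmod (v $ i)) {..<dim_vec v}"
  by (simp add: vnorm_def L2_set_def)

lemma vnorm_nonneg: "0 \<le> vnorm v"
  by (simp add: vnorm_def sum_nonneg)

lemma vnorm_sq: "(vnorm v)\<^sup>2 = (\<Sum>i<dim_vec v. (cmod (v $ i))\<^sup>2)"
  unfolding vnorm_def by (simp add: sum_nonneg)

lemma vnorm_smult: "vnorm (c \<cdot>\<^sub>v v) = cmod c * vnorm v"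
proof -
  have "(\<Sum>i<dim_vec v. (cmod ((c \<cdot>\<^sub>v v) $ i))\<^sup>2) = (cmod c)\<^sup>2 * (\<Sum>i<dim_vec v. (cmod (v $ i))\<^sup>2)"
    by (simp add: sum_distrib_left norm_mult power_mult_distrib)
  then show ?thesis by (simp add: vnorm_def real_sqrt_mult)
qed

lemma braket_self: "braket v v = complex_of_real ((vnorm v)\<^sup>2)"
proof -
  have "cnj z * z = complex_of_real ((cmod z)\<^sup>2)" for z
    using complex_norm_square[of z] by (simp add: mult.commute)
  thus ?thesis unfolding braket_def vnorm_sq by simp
qed

lemma braket_Cauchy_Schwarz:
  assumes "dim_vec u = dim_vec v"
  shows "cmod (braket u v) \<le> vnorm u * vnorm v"
proof -
  have "cmod (braket u v) \<le> (\<Sum>i<dim_vec u. cmod (cnj (u $ i) * v $ i))"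
    unfolding braket_def by (rule norm_sum)
  also have "\<dots> = (\<Sum>i<dim_vec u. \<bar>cmod (u $ i)\<bar> * \<bar>cmod (v $ i)\<bar>)"
    by (simp add: norm_mult)
  also have "\<dots> \<le> L2_set (\<lambda>i. cmod (u $ i)) {..<dim_vec u} * L2_set (\<lambda>i. cmod (v $ i)) {..<dim_vec u}"
    by (rule L2_set_mult_ineq)
  also have "\<dots> = vnorm u * vnorm v"
    using assms by (simp add: vnorm_L2)
  finally show ?thesis .
qed

lemma braket_herm_mult_vec:
  assumes X: "X \<in> carrier_mat d d" and aX: "adj X = X"
    and u: "dim_vec u = d" and v: "dim_vec v = d"
  shows "braket u (X *\<^sub>v v) = braket (X *\<^sub>v u) v"
proof -
  have entry: "cnj (X $$ (j, i)) = X $$ (i, j)" if "i < d" "j < d" for i j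
    using X that arg_cong[OF aX, of "\<lambda>M. M $$ (i, j)"] by (simp add: adj_def)
  have "braket u (X *\<^sub>v v) = (\<Sum>i<d. \<Sum>j<d. cnj (u $ i) * (X $$ (i, j) * v $ j))"
    unfolding braket_def using X u v
    by (intro sum.cong) (auto simp: scalar_prod_def atLeast0LessThan sum_distrib_left)
  also have "\<dots> = (\<Sum>j<d. \<Sum>i<d. cnj (X $$ (j, i)) * cnj (u $ i) * v $ j)"
    using entry by (subst sum.swap) (auto simp: ac_simps intro!: sum.cong)
  also have "\<dots> = braket (X *\<^sub>v u) v"
    unfolding braket_def using X u
    by (intro sum.cong) (auto simp: scalar_prod_def atLeast0LessThan sum_distrib_right)
  finally show ?thesis .
qed

lemma bdd_above_spec_norm_set:
  assumes H: "H \<in> carrier_mat N N"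
  shows "bdd_above {vnorm (H *\<^sub>v v) | v. v \<in> carrier_vec (dim_col H) \<and> vnorm v \<le> 1}"
proof (rule bdd_aboveI, safe)
  fix v assume v: "v \<in> carrier_vec (dim_col H)" "vnorm v \<le> 1"
  have entry_le: "cmod (v $ j) \<le> 1" if "j < N" for j
    using v H that member_le_L2_set[of "{..<N}" j "\<lambda>i. cmod (v $ i)"]
    by (simp add: vnorm_L2)
  have "dim_vec (H *\<^sub>v v) = N" using H by simp
  then have "vnorm (H *\<^sub>v v) \<le> (\<Sum>i<N. cmod ((H *\<^sub>v v) $ i))"
    unfolding vnorm_L2 by (metis L2_set_le_sum norm_ge_zero)
  also have "\<dots> \<le> (\<Sum>i<N. \<Sum>j<N. cmod (H $$ (i, j)))"
  proof (rule sum_mono)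
    fix i assume i: "i \<in> {..<N}"
    have "cmod ((H *\<^sub>v v) $ i) = cmod (\<Sum>j<N. H $$ (i, j) * v $ j)"
      using H v i by (auto simp: scalar_prod_def atLeast0LessThan)
    also have "\<dots> \<le> (\<Sum>j<N. cmod (H $$ (i, j)))"
      using entry_le by (intro order.trans[OF norm_sum] sum_mono)
        (simp add: norm_mult mult_left_le)
    finally show "cmod ((H *\<^sub>v v) $ i) \<le> (\<Sum>j<N. cmod (H $$ (i, j)))" .
  qed
  finally show "vnorm (H *\<^sub>v v) \<le> (\<Sum>i<N. \<Sum>j<N. cmod (H $$ (i, j)))" .
qed

lemma vnorm_mult_vec_le_spec_norm:
  assumes H: "H \<in> carrier_mat N N" and v: "v \<in> carrier_vec N"
  shows "vnorm (H *\<^sub>v v) \<le> spec_norm H * vnorm v"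
proof (cases "vnorm v = 0")
  case True
  then have "v = 0\<^sub>v N"
    using v by (intro eq_vecI) (auto simp: vnorm_def sum_nonneg_eq_0_iff)
  then show ?thesis using H by (simp add: vnorm_def)
next
  case False
  define r where "r = vnorm v"
  have r: "r > 0" using False vnorm_nonneg[of v] unfolding r_def by simp
  define u where "u = complex_of_real (1 / r) \<cdot>\<^sub>v v"
  have "vnorm u = 1" using r by (simp add: u_def vnorm_smult r_def norm_divide)
  then have "vnorm (H *\<^sub>v u) \<le> spec_norm H"
    unfolding spec_norm_def using H v bdd_above_spec_norm_set[OF H]
    by (intro cSup_upper) (auto simp: u_def)
  moreover have "vnorm (H *\<^sub>v u) = vnorm (H *\<^sub>v v) / r"
    using H v r by (simp add: u_def mult_mat_vec vnorm_smult norm_divide)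
  ultimately show ?thesis using r by (simp add: r_def field_simps)
qed

definition is_contraction :: "nat \<Rightarrow> complex mat \<Rightarrow> bool" where
  "is_contraction d A \<longleftrightarrow> A \<in> carrier_mat d d \<and> (\<forall>v\<in>carrier_vec d. vnorm (A *\<^sub>v v) \<le> vnorm v)"

lemma is_contraction_if_spec_norm_le_1:
  assumes H: "H \<in> carrier_mat N N" and norm: "spec_norm H \<le> 1"
  shows "is_contraction N H"
  unfolding is_contraction_def
proof (intro conjI H ballI)
  fix v :: "complex vec" assume v: "v \<in> carrier_vec N"
  have "vnorm (H *\<^sub>v v) \<le> spec_norm H * vnorm v"
    by (rule vnorm_mult_vec_le_spec_norm[OF H v])
  also have "\<dots> \<le> 1 * vnorm v"
    using norm vnorm_nonneg by (rule mult_right_mono)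
  finally show "vnorm (H *\<^sub>v v) \<le> vnorm v" by simp
qed

lemma is_contraction_orth_projector:
  assumes X: "X \<in> carrier_mat d d" and idem: "X * X = X" and aX: "adj X = X"
  shows "is_contraction d X"
  unfolding is_contraction_def
proof (intro conjI X ballI)
  fix v :: "complex vec" assume v: "v \<in> carrier_vec d"
  let ?p = "X *\<^sub>v v"
  have "complex_of_real ((vnorm ?p)\<^sup>2) = braket v (X *\<^sub>v ?p)"
    using braket_herm_mult_vec[OF X aX, of v ?p] X v by (simp add: braket_self)
  also have "X *\<^sub>v ?p = ?p"
    using X v idem by (simp flip: assoc_mult_mat_vec)
  finally have "(vnorm ?p)\<^sup>2 = cmod (braket v ?p)"
    by (metis norm_of_real abs_of_nonneg zero_le_power2)
  also have "\<dots> \<le> vnorm v * vnorm ?p"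
    using X v by (intro braket_Cauchy_Schwarz) simp
  finally show "vnorm ?p \<le> vnorm v"
    using vnorm_nonneg[of ?p] vnorm_nonneg[of v]
    by (cases "vnorm ?p = 0") (auto simp: power2_eq_square)
qed

lemma kron_one_mult_vec_block:
  assumes H: "H \<in> carrier_mat N N" and v: "v \<in> carrier_vec (N * N)"
    and x: "x < N" and y: "y < N"
  shows "(kron (1\<^sub>m N) H *\<^sub>v v) $ (x * N + y) = (H *\<^sub>v vec N (\<lambda>y'. v $ (x * N + y'))) $ y"
proof -
  have "(kron (1\<^sub>m N) H *\<^sub>v v) $ (x * N + y) = (\<Sum>l<N * N. kron (1\<^sub>m N) H $$ (x * N + y, l) * v $ l)"
    using index_pair_less[OF x y] H v
    by (auto simp: kron_def scalar_prod_def atLeast0LessThan intro!: sum.cong)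
  also have "\<dots> = (\<Sum>x'<N. \<Sum>y'<N. kron (1\<^sub>m N) H $$ (x * N + y, x' * N + y') * v $ (x' * N + y'))"
    by (rule sum_lessThan_mult_split)
  also have "\<dots> = (\<Sum>x'<N. \<Sum>y'<N. if x = x' then H $$ (y, y') * v $ (x' * N + y') else 0)"
    using H x y by (intro sum.cong refl) (simp add: kron_index[of _ N _ N])
  also have "\<dots> = (H *\<^sub>v vec N (\<lambda>y'. v $ (x * N + y'))) $ y"
    using H x y by (simp add: sum.swap[of _ "{..<N}" "{..<N}"] scalar_prod_def atLeast0LessThan)
  finally show ?thesis .
qed

lemma is_contraction_kron_one:
  assumes "is_contraction N H"
  shows "is_contraction (N * N) (kron (1\<^sub>m N) H)"
  unfolding is_contraction_def
proof (intro conjI ballI)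
  have H: "H \<in> carrier_mat N N" using assms by (simp add: is_contraction_def)
  then show "kron (1\<^sub>m N) H \<in> carrier_mat (N * N) (N * N)" by (simp add: kron_def)
  fix v :: "complex vec" assume v: "v \<in> carrier_vec (N * N)"
  define b where "b x = vec N (\<lambda>y. v $ (x * N + y))" for x
  have "dim_vec (kron (1\<^sub>m N) H *\<^sub>v v) = N * N" using H by (simp add: kron_def)
  then have "(vnorm (kron (1\<^sub>m N) H *\<^sub>v v))\<^sup>2 = (\<Sum>j<N * N. (cmod ((kron (1\<^sub>m N) H *\<^sub>v v) $ j))\<^sup>2)"
    by (simp only: vnorm_sq)
  also have "\<dots> = (\<Sum>x<N. \<Sum>y<N. (cmod ((H *\<^sub>v b x) $ y))\<^sup>2)"
    by (subst sum_lessThan_mult_split) (simp add: kron_one_mult_vec_block[OF H v] b_def)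
  also have "\<dots> = (\<Sum>x<N. (vnorm (H *\<^sub>v b x))\<^sup>2)"
    using H by (simp add: vnorm_sq)
  also have "\<dots> \<le> (\<Sum>x<N. (vnorm (b x))\<^sup>2)"
    using assms by (intro sum_mono power_mono) (auto simp: is_contraction_def b_def vnorm_nonneg)
  also have "\<dots> = (vnorm v)\<^sup>2"
    using v by (simp add: vnorm_sq b_def sum_lessThan_mult_split)
  finally show "vnorm (kron (1\<^sub>m N) H *\<^sub>v v) \<le> vnorm v"
    using vnorm_nonneg by (rule power2_le_imp_le)
qed

lemma is_contraction_mult:
  assumes "is_contraction d A" "is_contraction d B"
  shows "is_contraction d (A * B)"
  unfolding is_contraction_def
proof (intro conjI ballI)
  have A: "A \<in> carrier_mat d d" and B: "B \<in> carrier_mat d d"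
    using assms by (simp_all add: is_contraction_def)
  then show "A * B \<in> carrier_mat d d" by simp
  fix v :: "complex vec" assume v: "v \<in> carrier_vec d"
  have "vnorm ((A * B) *\<^sub>v v) = vnorm (A *\<^sub>v (B *\<^sub>v v))"
    using A B v by simp
  also have "\<dots> \<le> vnorm (B *\<^sub>v v)"
    using assms(1) B v by (simp add: is_contraction_def)
  also have "\<dots> \<le> vnorm v"
    using assms(2) v by (simp add: is_contraction_def)
  finally show "vnorm ((A * B) *\<^sub>v v) \<le> vnorm v" .
qed

lemma is_contraction_pow:
  assumes "is_contraction d A"
  shows "is_contraction d (A ^\<^sub>m m)"
proof (induction m)
  case 0
  then show ?case using assms by (auto simp: is_contraction_def)
next
  case (Suc m)
  then show ?case using is_contraction_mult[OF Suc assms] by simp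
qed

section \<open>Moments of a Hermitian contraction\<close>

lemma pow_mat_Suc_left:
  assumes A: "A \<in> carrier_mat d d"
  shows "A ^\<^sub>m Suc m = A * A ^\<^sub>m m"
proof (induction m)
  case 0
  then show ?case using A by simp
next
  case (Suc m)
  have "A ^\<^sub>m Suc (Suc m) = (A * A ^\<^sub>m m) * A" using Suc by simp
  also have "\<dots> = A * (A ^\<^sub>m m * A)" using A by (intro assoc_mult_mat) auto
  finally show ?case by simp
qed

lemma braket_pow_add_2_herm:
  assumes A: "A \<in> carrier_mat d d" and aA: "adj A = A" and s: "s \<in> carrier_vec d"
  shows "braket s ((A ^\<^sub>m (m + 2)) *\<^sub>v s) = braket (A *\<^sub>v s) ((A ^\<^sub>m m) *\<^sub>v (A *\<^sub>v s))"
proof -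
  have "A ^\<^sub>m (m + 2) = A * A ^\<^sub>m m * A"
    using pow_mat_Suc_left[OF A, of m] by simp
  then have "(A ^\<^sub>m (m + 2)) *\<^sub>v s = A *\<^sub>v ((A ^\<^sub>m m) *\<^sub>v (A *\<^sub>v s))"
    using A s by (simp add: assoc_mult_mat_vec[of _ d d _ d])
  then show ?thesis
    using braket_herm_mult_vec[OF A aA] A s by simp
qed

lemma herm_contraction_moments:
  assumes A: "is_contraction d A" and aA: "adj A = A" and s: "s \<in> carrier_vec d"
  shows "2 \<le> l \<Longrightarrow> cmod (braket s ((A ^\<^sub>m l) *\<^sub>v s)) \<le> (vnorm (A *\<^sub>v s))\<^sup>2"
    and "braket s ((A ^\<^sub>m 2) *\<^sub>v s) = complex_of_real ((vnorm (A *\<^sub>v s))\<^sup>2)"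
proof -
  have Ac: "A \<in> carrier_mat d d" using A by (simp add: is_contraction_def)
  let ?w = "A *\<^sub>v s"
  have w: "?w \<in> carrier_vec d" using Ac s by simp
  have "braket s ((A ^\<^sub>m 2) *\<^sub>v s) = braket ?w ?w"
    using braket_pow_add_2_herm[OF Ac aA s, of 0] Ac w by (simp add: numeral_2_eq_2)
  then show "braket s ((A ^\<^sub>m 2) *\<^sub>v s) = complex_of_real ((vnorm ?w)\<^sup>2)"
    by (simp only: braket_self)
  assume "2 \<le> l"
  then obtain m where l: "l = m + 2" using le_Suc_ex by (metis add.commute)
  have "cmod (braket s ((A ^\<^sub>m l) *\<^sub>v s)) \<le> vnorm ?w * vnorm ((A ^\<^sub>m m) *\<^sub>v ?w)"
    unfolding l braket_pow_add_2_herm[OF Ac aA s] using Ac w by (intro braket_Cauchy_Schwarz) simp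
  also have "\<dots> \<le> vnorm ?w * vnorm ?w"
    using is_contraction_pow[OF A, of m] w vnorm_nonneg
    by (intro mult_left_mono) (auto simp: is_contraction_def)
  finally show "cmod (braket s ((A ^\<^sub>m l) *\<^sub>v s)) \<le> (vnorm ?w)\<^sup>2"
    by (simp add: power2_eq_square)
qed


section \<open>The states \<open>\<sigma>_P\<close> and the projector onto \<open>D\<close>\<close>

lemma sigma_I_eq_vectorize: "sigma_I n = vectorize (2 ^ n) (1\<^sub>m (2 ^ n))"
proof (rule eq_vecI)
  fix j assume "j < dim_vec (vectorize (2 ^ n) (1\<^sub>m (2 ^ n)))"
  hence j: "j < 2 ^ n * 2 ^ n" by simp
  then have "j div 2 ^ n < 2 ^ n" by (simp add: less_mult_imp_div_less)
  then show "sigma_I n $ j = vectorize (2 ^ n) (1\<^sub>m (2 ^ n)) $ j"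
    using j by (auto simp: sigma_I_def vectorize_def)
qed (simp add: sigma_I_def)

lemma sigma_eq_vectorize:
  assumes "P \<in> paulis n"
  shows "sigma n P = vectorize (2 ^ n) (pauli_mat P)"
proof -
  have "pauli_mat P \<in> carrier_mat (2 ^ n) (2 ^ n)"
    using assms pauli_mat_carrier[of P] by (simp add: paulis_def)
  then show ?thesis
    unfolding sigma_def sigma_I_eq_vectorize by (simp add: kron_one_mult_vectorize right_mult_one_mat)
qed

lemma sigma_replicate_PI: "sigma n (replicate n PI) = sigma_I n"
  by (simp add: sigma_eq_vectorize paulis_def pauli_mat_replicate_PI sigma_I_eq_vectorize)

lemma dim_sigma: "P \<in> paulis n \<Longrightarrow> dim_vec (sigma n P) = 2 ^ n * 2 ^ n"
  by (simp add: sigma_eq_vectorize)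

lemma braket_sigma:
  assumes "P \<in> paulis n" "Q \<in> paulis n"
  shows "braket (sigma n P) (sigma n Q) = (if P = Q then 1 else 0)"
  using assms hs_inner_pauli_mat[of Q P]
  by (simp add: sigma_eq_vectorize braket_vectorize paulis_def)

lemma orthonormal_family_sigma:
  assumes "S \<subseteq> paulis n"
  shows "orthonormal_family (2 ^ n * 2 ^ n) (sigma n) S"
  using assms finite_subset[OF assms finite_paulis]
  by (auto simp: orthonormal_family_def dim_sigma braket_sigma subset_iff)

lemma D_paulis_subset: "D_paulis n k \<subseteq> paulis n"
  by (auto simp: D_paulis_def)

lemma Pi_D_eq_family_proj: "Pi_D n k = family_proj (2 ^ n * 2 ^ n) (sigma n) (D_paulis n k)"
  using orth_proj_family_span[OF orthonormal_family_sigma[OF D_paulis_subset]]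
  by (simp add: Pi_D_def D_space_def family_span_def)

lemma vectorize_pauli_sum:
  assumes S: "S \<subseteq> paulis n"
  shows "vectorize (2 ^ n) (pauli_sum n \<alpha> S)
    = vec (2 ^ n * 2 ^ n) (\<lambda>j. \<Sum>P\<in>S. complex_of_real (\<alpha> P) * sigma n P $ j)"
proof (rule eq_vecI)
  fix j assume "j < dim_vec (vec (2 ^ n * 2 ^ n) (\<lambda>j. \<Sum>P\<in>S. complex_of_real (\<alpha> P) * sigma n P $ j))"
  hence j: "j < 2 ^ n * 2 ^ n" by simp
  have "j div 2 ^ n < 2 ^ n" using j by (simp add: less_mult_imp_div_less)
  moreover have "j mod 2 ^ n < (2::nat) ^ n" by simp
  moreover have "length P = n" if "P \<in> S" for P using that S by (auto simp: paulis_def)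
  ultimately show "vectorize (2 ^ n) (pauli_sum n \<alpha> S) $ j =
      vec (2 ^ n * 2 ^ n) (\<lambda>j. \<Sum>P\<in>S. complex_of_real (\<alpha> P) * sigma n P $ j) $ j"
    using j S
    by (auto simp: vectorize_def pauli_sum_def sigma_eq_vectorize sum_distrib_right mult.assoc
        sum_divide_distrib subset_iff intro!: sum.cong)
qed simp

lemma braket_sigma_vectorize_pauli_sum:
  assumes Q: "Q \<in> paulis n" and S: "S \<subseteq> paulis n"
  shows "braket (sigma n Q) (vectorize (2 ^ n) (pauli_sum n \<alpha> S))
    = (if Q \<in> S then complex_of_real (\<alpha> Q) else 0)"
proof -
  have "braket (sigma n Q) (vectorize (2 ^ n) (pauli_sum n \<alpha> S))
      = (\<Sum>P\<in>S. complex_of_real (\<alpha> P) * braket (sigma n Q) (sigma n P))"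
    unfolding vectorize_pauli_sum[OF S] using Q by (intro braket_lincomb) (simp add: dim_sigma)
  also have "\<dots> = (\<Sum>P\<in>S. if P = Q then complex_of_real (\<alpha> P) else 0)"
    using Q S by (intro sum.cong refl) (auto simp: braket_sigma)
  also have "\<dots> = (if Q \<in> S then complex_of_real (\<alpha> Q) else 0)"
    using finite_subset[OF S finite_paulis] by simp
  finally show ?thesis .
qed

lemma family_proj_sigma_vectorize_pauli_sum:
  assumes S: "S \<subseteq> paulis n"
  shows "family_proj (2 ^ n * 2 ^ n) (sigma n) S *\<^sub>v vectorize (2 ^ n) (pauli_sum n \<alpha> (paulis n))
    = vectorize (2 ^ n) (pauli_sum n \<alpha> S)"
proof -
  have "family_proj (2 ^ n * 2 ^ n) (sigma n) S *\<^sub>v vectorize (2 ^ n) (pauli_sum n \<alpha> (paulis n))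
      = vec (2 ^ n * 2 ^ n) (\<lambda>i. \<Sum>P\<in>S.
          braket (sigma n P) (vectorize (2 ^ n) (pauli_sum n \<alpha> (paulis n))) * sigma n P $ i)"
    by (rule family_proj_mult_vec[OF orthonormal_family_sigma[OF S]]) simp
  also have "\<dots> = vec (2 ^ n * 2 ^ n) (\<lambda>i. \<Sum>P\<in>S. complex_of_real (\<alpha> P) * sigma n P $ i)"
    using S braket_sigma_vectorize_pauli_sum[of _ n "paulis n"]
    by (intro eq_vecI sum.cong) (auto simp: subset_iff)
  also have "\<dots> = vectorize (2 ^ n) (pauli_sum n \<alpha> S)"
    by (rule vectorize_pauli_sum[OF S, symmetric])
  finally show ?thesis .
qed

lemma mtrace_pauli_sum: "mtrace (pauli_sum n \<alpha> (paulis n)) = 2 ^ n * complex_of_real (\<alpha> (replicate n PI))"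
proof -
  have I: "replicate n PI \<in> paulis n" by (simp add: paulis_def)
  have "mtrace (pauli_sum n \<alpha> (paulis n)) = hs_inner (2 ^ n) (1\<^sub>m (2 ^ n)) (pauli_sum n \<alpha> (paulis n))"
    by (simp add: mtrace_eq_hs_inner_one)
  also have "\<dots> = 2 ^ n * braket (sigma n (replicate n PI)) (vectorize (2 ^ n) (pauli_sum n \<alpha> (paulis n)))"
    by (simp add: sigma_replicate_PI sigma_I_eq_vectorize braket_vectorize)
  finally show ?thesis
    using braket_sigma_vectorize_pauli_sum[OF I subset_refl] I by simp
qed

lemma Pi_D_kron_pauli_sum_sigma_I:
  assumes "\<alpha> (replicate n PI) = 0"
  shows "(Pi_D n k * kron (1\<^sub>m (2 ^ n)) (pauli_sum n \<alpha> (paulis n)) * Pi_D n k) *\<^sub>v sigma_I n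
    = vectorize (2 ^ n) (pauli_sum n \<alpha> {P \<in> paulis n. k < weight P})"
proof -
  let ?d = "2 ^ n * 2 ^ n" and ?H = "pauli_sum n \<alpha> (paulis n)"
  have ON: "orthonormal_family ?d (sigma n) (D_paulis n k)"
    by (rule orthonormal_family_sigma[OF D_paulis_subset])
  have P: "Pi_D n k \<in> carrier_mat ?d ?d" by (simp add: Pi_D_eq_family_proj)
  have K: "kron (1\<^sub>m (2 ^ n)) ?H \<in> carrier_mat ?d ?d" by (simp add: kron_carrier_mat)
  have s: "sigma_I n \<in> carrier_vec ?d" by (simp add: sigma_I_def)
  have "replicate n PI \<in> D_paulis n k" by (simp add: D_paulis_def paulis_def)
  then have fixed: "Pi_D n k *\<^sub>v sigma_I n = sigma_I n"
    unfolding Pi_D_eq_family_proj sigma_replicate_PI[symmetric]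
    by (intro family_proj_fixes_span[OF ON] family_member_in_span[OF ON])
  have "(Pi_D n k * kron (1\<^sub>m (2 ^ n)) ?H * Pi_D n k) *\<^sub>v sigma_I n
      = (Pi_D n k * kron (1\<^sub>m (2 ^ n)) ?H) *\<^sub>v sigma_I n"
    using assoc_mult_mat_vec[OF mult_carrier_mat[OF P K] P s] fixed by simp
  also have "\<dots> = Pi_D n k *\<^sub>v (kron (1\<^sub>m (2 ^ n)) ?H *\<^sub>v sigma_I n)"
    using P K s by (rule assoc_mult_mat_vec)
  also have "kron (1\<^sub>m (2 ^ n)) ?H *\<^sub>v sigma_I n = vectorize (2 ^ n) ?H"
    by (simp add: sigma_I_eq_vectorize kron_one_mult_vectorize right_mult_one_mat[OF pauli_sum_carrier])
  also have "Pi_D n k *\<^sub>v vectorize (2 ^ n) ?H = vectorize (2 ^ n) (pauli_sum n \<alpha> (D_paulis n k))"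
    unfolding Pi_D_eq_family_proj by (rule family_proj_sigma_vectorize_pauli_sum[OF D_paulis_subset])
  also have "D_paulis n k = insert (replicate n PI) {P \<in> paulis n. k < weight P}"
    by (auto simp: D_paulis_def paulis_def)
  finally show ?thesis
    using assms finite_paulis by (simp add: pauli_sum_insert_zero)
qed

lemma nfrob_sq_eq_vnorm_vectorize:
  assumes "M \<in> carrier_mat (2 ^ n) (2 ^ n)"
  shows "(nfrob n M)\<^sup>2 = (vnorm (vectorize (2 ^ n) M))\<^sup>2"
proof -
  have "complex_of_real ((vnorm (vectorize (2 ^ n) M))\<^sup>2) = braket (vectorize (2 ^ n) M) (vectorize (2 ^ n) M)"
    by (rule braket_self[symmetric])
  also have "\<dots> = mtrace (adj M * M) / 2 ^ n"
    using assms by (simp add: braket_vectorize mtrace_adj_mult_eq_hs_inner)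
  finally have "complex_of_real ((vnorm (vectorize (2 ^ n) M))\<^sup>2) = mtrace (adj M * M) / 2 ^ n" .
  then have "(vnorm (vectorize (2 ^ n) M))\<^sup>2 = Re (mtrace (adj M * M)) / 2 ^ n"
    by (metis Re_complex_of_real Re_divide_of_nat of_nat_numeral of_nat_power)
  then show ?thesis
    unfolding nfrob_def by (metis zero_le_power2 real_sqrt_pow2)
qed


theorem lemma4p10:
  fixes n k :: nat and \<alpha> :: "pauli list \<Rightarrow> real" and H :: "complex mat" and l :: nat
  assumes H_def: "H = pauli_sum n \<alpha> (paulis n)"
    and H_norm: "spec_norm H \<le> 1"
    and H_tr: "mtrace H = 0"
    and l_ge: "l \<ge> 2"
  shows "(let A = Pi_D n k * kron (1\<^sub>m (2 ^ n)) H * Pi_D n k;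
              s = sigma_I n;
              Hk = pauli_sum n \<alpha> {P \<in> paulis n. weight P > k}
          in cmod (braket s ((A ^\<^sub>m l) *\<^sub>v s)) \<le> Re (braket s ((A ^\<^sub>m 2) *\<^sub>v s))
             \<and> braket s ((A ^\<^sub>m 2) *\<^sub>v s) = complex_of_real ((nfrob n Hk)\<^sup>2))"
proof -
  define N where "N = (2::nat) ^ n"
  define A where "A = Pi_D n k * kron (1\<^sub>m N) H * Pi_D n k"
  define Hk where "Hk = pauli_sum n \<alpha> {P \<in> paulis n. weight P > k}"
  have H: "H \<in> carrier_mat N N" "adj H = H"
    unfolding H_def N_def by (simp_all add: adj_pauli_sum)
  have P: "Pi_D n k \<in> carrier_mat (N * N) (N * N)" "Pi_D n k * Pi_D n k = Pi_D n k"
    "adj (Pi_D n k) = Pi_D n k"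
    unfolding Pi_D_eq_family_proj N_def
    by (simp_all add: family_proj_idem orthonormal_family_sigma[OF D_paulis_subset] adj_family_proj)
  have "is_contraction (N * N) A"
    unfolding A_def using H P H_norm
    by (intro is_contraction_mult is_contraction_orth_projector is_contraction_kron_one
        is_contraction_if_spec_norm_le_1)
  moreover have "adj A = A"
    unfolding A_def using H P kron_carrier_mat[OF one_carrier_mat H(1)]
    by (intro adj_sandwich adj_kron_one) auto
  moreover have "sigma_I n \<in> carrier_vec (N * N)"
    by (simp add: sigma_I_def N_def)
  moreover have "A *\<^sub>v sigma_I n = vectorize N Hk"
    using H_tr mtrace_pauli_sum[of n \<alpha>] Pi_D_kron_pauli_sum_sigma_I[of \<alpha> n k]
    by (simp add: A_def Hk_def H_def N_def)
  moreover have "(nfrob n Hk)\<^sup>2 = (vnorm (vectorize N Hk))\<^sup>2"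
    unfolding Hk_def N_def by (rule nfrob_sq_eq_vnorm_vectorize) simp
  ultimately show ?thesis
    using herm_contraction_moments[of "N * N" A "sigma_I n"] l_ge
    unfolding Let_def N_def[symmetric] A_def[symmetric] Hk_def[symmetric] by simp
qed

end
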